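(* Let $(a_n)_{n<0}$ be a sequence in $\mathbb{Z}((q))$ satisfying the lower bound condition, and for $j\in\mathbb{Z}$ define \[ r_j=-\sum_{k\ge|j|}a_{-k-1}\frac{(-1)^{k+j}q^{\binom{k+1}{2}+\binom{j+1}{2}}}{(q;q)_{k+j}(q;q)_{k-j}}\in\mathbb{Z}((q)). \] Then the series $\sum_{j\in\mathbb{Z}}r_j$ converges in $\mathbb{Z}((q))$ and \[ \sum_{j\in\mathbb{Z}}r_j=-a_{-1}. \]
   Context: $(a;q)_n=\prod_{i=0}^{n-1}(1-aq^i)$; $\binom{j+1}{2}=\frac{j(j+1)}{2}$ for all integers $j$. For $f\in\mathbb{Z}((q))$, $\delta(f)$ is the minimal exponent of $q$ in $f$. The lower bound condition: there is a constant $C$ with $\delta(a_n)\ge-\frac{n(n+3)}{2}+C$ for all $n<0$. Interpretation: $r_j$ is the term-by-term residue at $x=q^j$ of the inverted Habiro series $P(x)=\sum_{k\ge0}a_{-k-1}\frac{(-1)^kq^{\binom{k+1}{2}}}{(x;q)_{k+1}(qx^{-1};q)_k}$, and $a_{-1}$ (which equals $f_0$, the constant coefficient of its expansion at $x=0$) is its term-by-term residue at $x=\infty$. *)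

theory Defs
  imports "HOL-Computational_Algebra.Formal_Laurent_Series"
begin

text \<open>Z((q)) is modelled as int fls, with q = fls_X.\<close>

definition qpoch :: "int fls \<Rightarrow> nat \<Rightarrow> int fls" where
  "qpoch a n = (\<Prod>i<n. 1 - a * fls_X ^ i)"

text \<open>The reciprocal in Z((q)) (unique when it exists; (q;q)_n is a unit).\<close>
definition fls_recip :: "int fls \<Rightarrow> int fls" where
  "fls_recip f = (THE g. f * g = 1)"

text \<open>binom(j+1,2) = j(j+1)/2 for all integers j.\<close>
definition binom2 :: "int \<Rightarrow> int" where
  "binom2 j = j * (j + 1) div 2"

text \<open>Convergence in the q-adic topology of Z((q)) of the (unconditional) sum of a
  family indexed by I: for every N, all sufficiently large finite partial sums
  agree with S in all coefficients below N.\<close>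
definition fls_has_sum :: "('i \<Rightarrow> int fls) \<Rightarrow> 'i set \<Rightarrow> int fls \<Rightarrow> bool" where
  "fls_has_sum f I S \<longleftrightarrow>
     (\<forall>N::int. \<exists>J0. finite J0 \<and> J0 \<subseteq> I \<and>
        (\<forall>J. finite J \<and> J0 \<subseteq> J \<and> J \<subseteq> I \<longrightarrow> (\<forall>n<N. fls_nth (S - sum f J) n = 0)))"

definition fls_summable :: "('i \<Rightarrow> int fls) \<Rightarrow> 'i set \<Rightarrow> bool" where
  "fls_summable f I \<longleftrightarrow> (\<exists>S. fls_has_sum f I S)"

definition fls_infsum :: "('i \<Rightarrow> int fls) \<Rightarrow> 'i set \<Rightarrow> int fls" where
  "fls_infsum f I = (THE S. fls_has_sum f I S)"

definition lower_bound_cond :: "(int \<Rightarrow> int fls) \<Rightarrow> bool" where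
  "lower_bound_cond a \<longleftrightarrow> (\<exists>C::int. \<forall>n<0. a n \<noteq> 0 \<longrightarrow>
      fls_subdegree (a n) \<ge> - (n * (n + 3) div 2) + C)"

definition res_r :: "(int \<Rightarrow> int fls) \<Rightarrow> int \<Rightarrow> int fls" where
  "res_r a j = - fls_infsum (\<lambda>k. a (- k - 1) * fls_const ((-1) ^ nat (k + j))
        * fls_X_intpow (binom2 k + binom2 j)
        * fls_recip (qpoch fls_X (nat (k + j))) * fls_recip (qpoch fls_X (nat (k - j))))
      {k. k \<ge> \<bar>j\<bar>}"

end

(*
  The lower bound condition makes the k-th term of r_j vanish below q^(k+1+C), uniformly in j.
  Hence every r_j converges, r_j vanishes below q^(|j|+1+C), and modulo q^N all sums are finite,
  so the sums over j and k may be exchanged. For fixed k > 0, multiplying the inner sum over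
  -k <= j <= k by (q;q)_(2k) and writing j = m - k turns it, by the q-binomial theorem, into
  q^(k^2) (z;q)_(2k) with z = q^(1-k); this vanishes through the factor 1 - z q^(k-1).
  Only k = 0 survives, and it contributes -a_(-1).
*)

theory Submission
  imports Defs
begin

unbundle fps_syntax

lemma fls_nth_sum_mono_neutral:
  fixes f :: "'i \<Rightarrow> 'a::comm_monoid_add fls"
  assumes "finite J2" "J1 \<subseteq> J2" "\<forall>i\<in>J2 - J1. f i $$ n = 0"
  shows "sum f J2 $$ n = sum f J1 $$ n"
  unfolding fls_nth_sum using assms by (intro sum.mono_neutral_right) auto

lemma fls_has_sumI:
  fixes f :: "'i \<Rightarrow> int fls"
  assumes "\<And>N. \<exists>J0. finite J0 \<and> J0 \<subseteq> I \<and> (\<forall>i\<in>I - J0. \<forall>n<N. f i $$ n = 0)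
              \<and> (\<forall>n<N. S $$ n = sum f J0 $$ n)"
  shows "fls_has_sum f I S"
  unfolding fls_has_sum_def
proof
  fix N :: int
  obtain J0 where J0: "finite J0" "J0 \<subseteq> I" "\<forall>i\<in>I - J0. \<forall>n<N. f i $$ n = 0"
      "\<forall>n<N. S $$ n = sum f J0 $$ n"
    using assms[of N] by metis
  show "\<exists>J0. finite J0 \<and> J0 \<subseteq> I \<and>
      (\<forall>J. finite J \<and> J0 \<subseteq> J \<and> J \<subseteq> I \<longrightarrow> (\<forall>n<N. fls_nth (S - sum f J) n = 0))"
  proof (intro exI[of _ J0] conjI allI impI J0(1,2))
    fix J n assume J: "finite J \<and> J0 \<subseteq> J \<and> J \<subseteq> I" and "n < N"
    then have "sum f J $$ n = sum f J0 $$ n"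
      using J0(3) by (intro fls_nth_sum_mono_neutral) auto
    then show "fls_nth (S - sum f J) n = 0" using J0(4) \<open>n < N\<close> by simp
  qed
qed

lemma fls_has_sum_nth:
  fixes f :: "'i \<Rightarrow> int fls"
  assumes "fls_has_sum f I S" "finite J" "J \<subseteq> I" "\<forall>i\<in>I - J. \<forall>n<N. f i $$ n = 0" "n < N"
  shows "S $$ n = sum f J $$ n"
proof -
  obtain J0 where J0: "finite J0" "J0 \<subseteq> I"
    "\<forall>J. finite J \<and> J0 \<subseteq> J \<and> J \<subseteq> I \<longrightarrow> (\<forall>n<N. fls_nth (S - sum f J) n = 0)"
    using assms(1) unfolding fls_has_sum_def by metis
  have "S $$ n = sum f (J \<union> J0) $$ n"
    using J0(3)[rule_format, of "J \<union> J0" n] J0(1,2) assms(2,3,5) by auto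
  also have "\<dots> = sum f J $$ n"
    using assms J0 by (intro fls_nth_sum_mono_neutral) auto
  finally show ?thesis .
qed

lemma fls_has_sum_unique:
  fixes f :: "'i \<Rightarrow> int fls"
  assumes "fls_has_sum f I S" "fls_has_sum f I S'"
  shows "S = S'"
proof (rule fls_eqI)
  fix n
  obtain J0 where J0: "finite J0" "J0 \<subseteq> I"
    "\<forall>J. finite J \<and> J0 \<subseteq> J \<and> J \<subseteq> I \<longrightarrow> (\<forall>m<n+1. fls_nth (S - sum f J) m = 0)"
    using assms(1) unfolding fls_has_sum_def by metis
  obtain J1 where J1: "finite J1" "J1 \<subseteq> I"
    "\<forall>J. finite J \<and> J1 \<subseteq> J \<and> J \<subseteq> I \<longrightarrow> (\<forall>m<n+1. fls_nth (S' - sum f J) m = 0)"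
    using assms(2) unfolding fls_has_sum_def by metis
  have "S $$ n = sum f (J0 \<union> J1) $$ n" "S' $$ n = sum f (J0 \<union> J1) $$ n"
    using J0(3)[rule_format, of "J0 \<union> J1" n] J1(3)[rule_format, of "J0 \<union> J1" n] J0(1,2) J1(1,2)
    by auto
  then show "S $$ n = S' $$ n" by simp
qed

lemma fls_infsumI:
  fixes f :: "'i \<Rightarrow> int fls"
  assumes "fls_has_sum f I S"
  shows "fls_infsum f I = S"
  unfolding fls_infsum_def using assms fls_has_sum_unique by blast

lemma fls_has_sum_infsum:
  fixes f :: "'i \<Rightarrow> int fls"
  assumes "fls_summable f I"
  shows "fls_has_sum f I (fls_infsum f I)"
  using assms fls_infsumI unfolding fls_summable_def by blast

lemma fls_exists_nth_eq:
  fixes c :: "int \<Rightarrow> 'a::zero"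
  assumes "\<And>n. n < m \<Longrightarrow> c n = 0"
  shows "\<exists>S. \<forall>n. S $$ n = c n"
proof -
  have "fls_shift (-m) (fps_to_fls (Abs_fps (\<lambda>i. c (int i + m)))) $$ n = c n" for n
    using assms by auto
  then show ?thesis by blast
qed

lemma fls_summableI:
  fixes f :: "'i \<Rightarrow> int fls"
  assumes "\<And>N. finite {i\<in>I. \<exists>n<N. f i $$ n \<noteq> 0}"
  shows "fls_summable f I"
proof -
  define B where "B N = {i\<in>I. \<exists>n<N. f i $$ n \<noteq> 0}" for N
  have B_mono: "B N \<subseteq> B N'" if "N \<le> N'" for N N'
  proof
    fix i assume "i \<in> B N"
    then obtain n where "i \<in> I" "n < N" "f i $$ n \<noteq> 0" unfolding B_def by blast
    with that show "i \<in> B N'" unfolding B_def by force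
  qed
  have B_stable: "sum f (B N') $$ n = sum f (B N) $$ n" if "n < N" "N \<le> N'" for n N N'
    using that assms B_mono[of N N'] by (intro fls_nth_sum_mono_neutral) (auto simp: B_def)
  define c where "c n = sum f (B (n + 1)) $$ n" for n
  have "c n = 0" if "n < min 0 (fls_subdegree (sum f (B 0)))" for n
    using that B_stable[of n "n + 1" 0] unfolding c_def by simp
  then obtain S where S: "\<And>n. S $$ n = c n"
    using fls_exists_nth_eq by blast
  have "fls_has_sum f I S"
  proof (rule fls_has_sumI)
    fix N
    have "\<forall>n<N. S $$ n = sum f (B N) $$ n"
      unfolding S c_def using B_stable[of n "n + 1" N for n] by simp
    moreover have "finite (B N)" "B N \<subseteq> I" "\<forall>i\<in>I - B N. \<forall>n<N. f i $$ n = 0"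
      using assms unfolding B_def by auto
    ultimately show "\<exists>J0. finite J0 \<and> J0 \<subseteq> I \<and> (\<forall>i\<in>I - J0. \<forall>n<N. f i $$ n = 0)
        \<and> (\<forall>n<N. S $$ n = sum f J0 $$ n)"
      by blast
  qed
  then show ?thesis unfolding fls_summable_def by blast
qed

definition q_pochhammer :: "'a::comm_ring_1 \<Rightarrow> 'a \<Rightarrow> nat \<Rightarrow> 'a" where
  "q_pochhammer a q n = (\<Prod>i<n. 1 - a * q ^ i)"

lemma q_pochhammer_0 [simp]: "q_pochhammer a q 0 = 1"
  by (simp add: q_pochhammer_def)

lemma q_pochhammer_Suc: "q_pochhammer a q (Suc n) = q_pochhammer a q n * (1 - a * q ^ n)"
  by (simp add: q_pochhammer_def)

lemma q_pochhammer_Suc_shift: "q_pochhammer a q (Suc n) = (1 - a) * q_pochhammer (a * q) q n"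
  unfolding q_pochhammer_def prod.lessThan_Suc_shift by (simp add: algebra_simps)

lemma qpoch_eq_q_pochhammer: "qpoch a n = q_pochhammer a fls_X n"
  by (simp add: qpoch_def q_pochhammer_def)

fun qbinomial :: "'a::comm_ring_1 \<Rightarrow> nat \<Rightarrow> nat \<Rightarrow> 'a" where
  "qbinomial q n 0 = 1"
| "qbinomial q 0 (Suc m) = 0"
| "qbinomial q (Suc n) (Suc m) = qbinomial q n m + q ^ Suc m * qbinomial q n (Suc m)"

lemma qbinomial_eq_0: "n < m \<Longrightarrow> qbinomial q n m = 0"
proof (induction n arbitrary: m)
  case 0 then show ?case by (cases m) auto
next
  case (Suc n) then show ?case by (cases m) auto
qed

lemma qbinomial_diag [simp]: "qbinomial q n n = 1"
  by (induction n) (simp_all add: qbinomial_eq_0)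

lemma qbinomial_mult_q_pochhammer:
  fixes q :: "'a::comm_ring_1"
  assumes "m \<le> n"
  shows "qbinomial q n m * q_pochhammer q q m * q_pochhammer q q (n - m) = q_pochhammer q q n"
  using assms
proof (induction n arbitrary: m)
  case (Suc n)
  consider "m = 0" | "m = Suc n" | m' where "m = Suc m'" "m' < n"
    using Suc.prems by (cases m) (auto simp: le_eq_less_or_eq)
  then show ?case
  proof cases
    case 3
    define P where "P = q_pochhammer q q"
    obtain l where l: "n - m' = Suc l" "n - Suc m' = l"
      using \<open>m' < n\<close> by (metis Suc_diff_Suc diff_Suc_Suc)
    then have n_eq: "Suc m' + Suc l = Suc n" using \<open>m' < n\<close> by arith
    have P_m: "P (Suc m') = P m' * (1 - q ^ Suc m')" and P_l: "P (Suc l) = P l * (1 - q ^ Suc l)"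
      by (simp_all add: P_def q_pochhammer_Suc)
    have IH1: "qbinomial q n m' * P m' * P (Suc l) = P n"
      using Suc.IH[of m'] 3 l by (simp add: P_def)
    have IH2: "qbinomial q n (Suc m') * P (Suc m') * P l = P n"
      using Suc.IH[of "Suc m'"] 3 l by (simp add: P_def)
    have "qbinomial q (Suc n) (Suc m') * P (Suc m') * P (Suc l)
        = (qbinomial q n m' * P m' * P (Suc l)) * (1 - q ^ Suc m')
          + q ^ Suc m' * (1 - q ^ Suc l) * (qbinomial q n (Suc m') * P (Suc m') * P l)"
      by (simp only: qbinomial.simps P_m P_l) (simp add: algebra_simps)
    also have "\<dots> = P n * (1 - q ^ (Suc m' + Suc l))"
      unfolding IH1 IH2 by (simp add: algebra_simps power_add)
    also have "\<dots> = P (Suc n)"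
      unfolding n_eq by (simp add: P_def q_pochhammer_Suc)
    finally show ?thesis using 3 l by (simp add: P_def)
  qed simp_all
qed simp

lemma q_binomial_theorem:
  fixes q z :: "'a::comm_ring_1"
  shows "(\<Sum>m\<le>n. (-1) ^ m * q ^ (m choose 2) * qbinomial q n m * z ^ m) = q_pochhammer z q n"
proof (induction n arbitrary: z)
  case (Suc n)
  define c where "c m = (-1) ^ m * q ^ (m choose 2)" for m
  have c_0: "c 0 = 1" and c_Suc: "c (Suc m) = - (c m * q ^ m)" for m
    unfolding c_def by (simp_all add: numeral_2_eq_2 power_add)
  have "(\<Sum>m\<le>Suc n. c m * qbinomial q (Suc n) m * z ^ m)
      = 1 + (\<Sum>m\<le>n. c (Suc m) * q ^ Suc m * qbinomial q n (Suc m) * z ^ Suc m)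
          + (\<Sum>m\<le>n. c (Suc m) * qbinomial q n m * z ^ Suc m)"
    by (subst sum.atMost_Suc_shift) (simp add: c_0 sum.distrib ring_distribs ac_simps)
  also have "1 + (\<Sum>m\<le>n. c (Suc m) * q ^ Suc m * qbinomial q n (Suc m) * z ^ Suc m)
      = (\<Sum>m\<le>Suc n. c m * qbinomial q n m * (q * z) ^ m)"
    by (subst sum.atMost_Suc_shift) (simp add: c_0 power_mult_distrib ac_simps)
  also have "\<dots> = (\<Sum>m\<le>n. c m * qbinomial q n m * (q * z) ^ m)"
    by (simp add: qbinomial_eq_0)
  also have "(\<Sum>m\<le>n. c (Suc m) * qbinomial q n m * z ^ Suc m)
      = - z * (\<Sum>m\<le>n. c m * qbinomial q n m * (q * z) ^ m)"
    unfolding sum_distrib_left by (intro sum.cong refl) (simp add: c_Suc power_mult_distrib algebra_simps)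
  finally show ?case
    using Suc.IH[of "q * z"] by (simp add: c_def q_pochhammer_Suc_shift algebra_simps mult.commute[of z q])
qed (simp add: numeral_2_eq_2)

lemma q_pochhammer_eq_0:
  assumes "i < n" "a * q ^ i = 1"
  shows "q_pochhammer a q n = 0"
  unfolding q_pochhammer_def using assms by (intro prod_zero) auto

lemma fls_recip_eqI:
  assumes "f * g = 1"
  shows "fls_recip f = g"
  unfolding fls_recip_def
proof (rule the_equality)
  fix h assume "f * h = 1"
  then have "h = (f * g) * h" using assms by simp
  also have "\<dots> = g" using \<open>f * h = 1\<close> by (simp add: ac_simps)
  finally show "h = g" .
qed (rule assms)

lemma fls_recip_fps_to_fls:
  fixes f :: "int fps"
  assumes "f $ 0 = 1"
  shows "fls_recip (fps_to_fls f) = fps_to_fls (fps_right_inverse f 1)"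
    and "fps_to_fls f * fls_recip (fps_to_fls f) = 1"
proof -
  have "fps_to_fls f * fps_to_fls (fps_right_inverse f 1) = 1"
    using fps_right_inverse[of f 1] assms by (simp flip: fls_times_fps_to_fls)
  then show "fls_recip (fps_to_fls f) = fps_to_fls (fps_right_inverse f 1)"
    and "fps_to_fls f * fls_recip (fps_to_fls f) = 1"
    using fls_recip_eqI by auto
qed

lemma qpoch_X_eq_fps_to_fls: "qpoch fls_X n = fps_to_fls (q_pochhammer fps_X fps_X n)"
  by (induction n)
    (simp_all add: qpoch_eq_q_pochhammer q_pochhammer_Suc fls_times_fps_to_fls fps_to_fls_power)

lemma q_pochhammer_fps_X_nth_0: "q_pochhammer fps_X fps_X n $ 0 = (1::int)"
  by (induction n) (simp_all add: q_pochhammer_Suc)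

lemma qpoch_X_mult_recip: "qpoch fls_X n * fls_recip (qpoch fls_X n) = 1"
  unfolding qpoch_X_eq_fps_to_fls by (rule fls_recip_fps_to_fls(2)[OF q_pochhammer_fps_X_nth_0])

lemma fls_subdegree_recip_qpoch_X: "0 \<le> fls_subdegree (fls_recip (qpoch fls_X n))"
  unfolding qpoch_X_eq_fps_to_fls fls_recip_fps_to_fls(1)[OF q_pochhammer_fps_X_nth_0]
  by (rule fls_subdegree_fls_to_fps_gt0)

lemma qbinomial_fls_X_conv_qpoch:
  assumes "m \<le> n"
  shows "qbinomial fls_X n m
    = qpoch fls_X n * fls_recip (qpoch fls_X m) * fls_recip (qpoch fls_X (n - m))"
proof -
  have "qpoch fls_X n = qbinomial fls_X n m * qpoch fls_X m * qpoch fls_X (n - m)"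
    using qbinomial_mult_q_pochhammer[OF assms, of "fls_X :: int fls"] by (simp add: qpoch_eq_q_pochhammer)
  then have "qpoch fls_X n * fls_recip (qpoch fls_X m) * fls_recip (qpoch fls_X (n - m))
      = qbinomial fls_X n m * (qpoch fls_X m * fls_recip (qpoch fls_X m))
          * (qpoch fls_X (n - m) * fls_recip (qpoch fls_X (n - m)))"
    by (simp only: ac_simps)
  then show ?thesis by (simp add: qpoch_X_mult_recip)
qed

lemma two_binom2: "2 * binom2 j = j * (j + 1)"
  unfolding binom2_def by simp

lemma binom2_nonneg: "0 \<le> binom2 j"
proof -
  have "0 \<le> j * (j + 1)"
    by (cases "j \<ge> 0") (simp_all add: mult_nonpos_nonpos)
  then show ?thesis using two_binom2[of j] by simp
qed

lemma choose_two_eq_binom2: "int (m choose 2) = binom2 (int m - 1)"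
  by (cases m) (simp_all add: choose_two binom2_def zdiv_int algebra_simps)

lemma binom2_add_binom2_diff:
  "binom2 k + binom2 (int m - k) = k * k + int (m choose 2) + int m * (1 - k)"
  using two_binom2[of k] two_binom2[of "int m - k"] two_binom2[of "int m - 1"]
  unfolding choose_two_eq_binom2 by (simp add: algebra_simps)

definition res_kernel :: "int \<Rightarrow> int \<Rightarrow> int fls" where
  "res_kernel k j = fls_const ((-1) ^ nat (k + j)) * fls_X_intpow (binom2 k + binom2 j)
    * fls_recip (qpoch fls_X (nat (k + j))) * fls_recip (qpoch fls_X (nat (k - j)))"

lemma res_r_eq: "res_r a j = - fls_infsum (\<lambda>k. a (- k - 1) * res_kernel k j) {k. \<bar>j\<bar> \<le> k}"
  unfolding res_r_def res_kernel_def by (simp add: mult.assoc)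

lemma fls_subdegree_res_kernel: "binom2 k \<le> fls_subdegree (res_kernel k j)"
proof -
  define R where "R n = fls_recip (qpoch fls_X n)" for n
  have R: "R n \<noteq> 0" "0 \<le> fls_subdegree (R n)" for n
    using qpoch_X_mult_recip[of n] fls_subdegree_recip_qpoch_X[of n] unfolding R_def by auto
  have sign: "fls_const ((-1::int) ^ nat (k + j)) \<noteq> 0"
    by (simp add: fls_const_nonzero)
  have X: "fls_X_intpow (binom2 k + binom2 j) \<noteq> (0::int fls)"
    by (rule fls_X_intpow_nonzero)
  have "fls_subdegree (res_kernel k j)
      = binom2 k + binom2 j + fls_subdegree (R (nat (k + j))) + fls_subdegree (R (nat (k - j)))"
    unfolding res_kernel_def R_def[symmetric] using sign X R by (simp del: fls_subdegree_fls_X_intpow)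
  then show ?thesis
    using R binom2_nonneg[of j] by simp
qed

lemma sum_abs_le_swap:
  fixes g :: "int \<Rightarrow> int \<Rightarrow> 'a::comm_monoid_add"
  shows "(\<Sum>j=-M..M. \<Sum>k=\<bar>j\<bar>..M. g j k) = (\<Sum>k=0..M. \<Sum>j=-k..k. g j k)"
proof -
  have "(\<Sum>j=-M..M. \<Sum>k=\<bar>j\<bar>..M. g j k) = (\<Sum>j=-M..M. \<Sum>k\<in>{k\<in>{0..M}. \<bar>j\<bar> \<le> k}. g j k)"
    by (intro sum.cong refl) auto
  also have "\<dots> = (\<Sum>k=0..M. \<Sum>j\<in>{j\<in>{-M..M}. \<bar>j\<bar> \<le> k}. g j k)"
    by (rule sum.swap_restrict) simp_all
  also have "\<dots> = (\<Sum>k=0..M. \<Sum>j=-k..k. g j k)"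
    by (intro sum.cong refl) auto
  finally show ?thesis .
qed

lemma qpoch_mult_res_kernel:
  fixes K m :: nat
  assumes "m \<le> 2 * K"
  shows "qpoch fls_X (2 * K) * res_kernel (int K) (int m - int K)
    = fls_X_intpow (int K * int K)
      * ((-1) ^ m * fls_X ^ (m choose 2) * qbinomial fls_X (2 * K) m * fls_X_intpow (1 - int K) ^ m)"
proof -
  have "nat (int K + (int m - int K)) = m" "nat (int K - (int m - int K)) = 2 * K - m"
    using assms by auto
  then have "qpoch fls_X (2 * K) * res_kernel (int K) (int m - int K)
      = fls_const ((-1) ^ m) * fls_X_intpow (binom2 (int K) + binom2 (int m - int K))
        * qbinomial fls_X (2 * K) m"
    unfolding res_kernel_def qbinomial_fls_X_conv_qpoch[OF assms] by (simp add: ac_simps)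
  also have "fls_X_intpow (binom2 (int K) + binom2 (int m - int K))
      = fls_X_intpow (int K * int K) * fls_X ^ (m choose 2) * (fls_X_intpow (1 - int K) ^ m :: int fls)"
    unfolding binom2_add_binom2_diff fls_X_power_conv_shift_1 fls_X_intpow_power
    by (simp only: fls_X_intpow_times_fls_X_intpow mult.commute[of "int m"])
  finally show ?thesis by (simp add: fls_const_power ac_simps)
qed

lemma sum_res_kernel:
  assumes "0 \<le> k"
  shows "(\<Sum>j=-k..k. res_kernel k j) = (if k = 0 then 1 else 0)"
proof (cases "k = 0")
  case True
  then show ?thesis
    by (simp add: res_kernel_def binom2_def qpoch_def fls_recip_eqI)
next
  case False
  with assms obtain K where K: "k = int K" "0 < K"
    by (metis gr0I nonneg_eq_int of_nat_0)
  define z where "z = (fls_X_intpow (1 - int K) :: int fls)"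
  have "(\<Sum>j=-k..k. res_kernel k j) = (\<Sum>m\<le>2 * K. res_kernel (int K) (int m - int K))"
    by (rule sum.reindex_bij_witness[where i = "\<lambda>m. int m - k" and j = "\<lambda>j. nat (j + k)"])
      (auto simp: K)
  then have "qpoch fls_X (2 * K) * (\<Sum>j=-k..k. res_kernel k j)
      = fls_X_intpow (int K * int K)
        * (\<Sum>m\<le>2 * K. (-1) ^ m * fls_X ^ (m choose 2) * qbinomial fls_X (2 * K) m * z ^ m)"
    by (simp add: sum_distrib_left qpoch_mult_res_kernel z_def)
  also have "(\<Sum>m\<le>2 * K. (-1) ^ m * fls_X ^ (m choose 2) * qbinomial fls_X (2 * K) m * z ^ m)
      = q_pochhammer z fls_X (2 * K)"
    by (rule q_binomial_theorem)
  also have "\<dots> = 0"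
  proof (rule q_pochhammer_eq_0)
    show "K - 1 < 2 * K" using K by simp
    have "z * fls_X ^ (K - 1) = fls_X_intpow ((1 - int K) + int (K - 1))"
      unfolding z_def fls_X_power_conv_shift_1 by (simp only: fls_X_intpow_times_fls_X_intpow)
    then show "z * fls_X ^ (K - 1) = 1" using K by simp
  qed
  finally have "qpoch fls_X (2 * K) * (\<Sum>j=-k..k. res_kernel k j) = 0" by simp
  moreover have "qpoch fls_X (2 * K) \<noteq> 0" using qpoch_X_mult_recip[of "2 * K"] by auto
  ultimately show ?thesis using False by simp
qed

lemma res_term_nth_eq_0:
  assumes bound: "\<forall>n<0. a n \<noteq> 0 \<longrightarrow> fls_subdegree (a n) \<ge> - (n * (n + 3) div 2) + C"
    and "\<bar>j\<bar> \<le> k" "n < k + 1 + C"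
  shows "(a (- k - 1) * res_kernel k j) $$ n = 0"
proof (cases "a (- k - 1) = 0")
  case False
  have "0 \<le> k" using assms(2) abs_ge_zero[of j] by linarith
  then have "- ((- k - 1) * (- k - 1 + 3) div 2) + C \<le> fls_subdegree (a (- k - 1))"
    using bound[rule_format, of "- k - 1"] False by simp
  moreover have "(- k - 1) * (- k - 1 + 3) = 2 * (binom2 k - k - 1)"
    using two_binom2[of k] by (simp add: algebra_simps)
  ultimately have "k + 1 + C - binom2 k \<le> fls_subdegree (a (- k - 1))"
    by simp
  then show ?thesis
    using fls_subdegree_res_kernel[of k j] assms(3) by (intro fls_times_nth_eq0) simp
qed simp

lemma res_r_nth:
  assumes bound: "\<forall>n<0. a n \<noteq> 0 \<longrightarrow> fls_subdegree (a n) \<ge> - (n * (n + 3) div 2) + C"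
    and "n < M + 1 + C"
  shows "res_r a j $$ n = - (\<Sum>k=\<bar>j\<bar>..M. (a (- k - 1) * res_kernel k j) $$ n)"
proof -
  define t where "t k = a (- k - 1) * res_kernel k j" for k
  have t_vanish: "t k $$ n' = 0" if "\<bar>j\<bar> \<le> k" "n' < k + 1 + C" for k n'
    using res_term_nth_eq_0[OF bound that] unfolding t_def .
  have "fls_summable t {k. \<bar>j\<bar> \<le> k}"
  proof (rule fls_summableI)
    fix N
    have "{k \<in> {k. \<bar>j\<bar> \<le> k}. \<exists>n<N. t k $$ n \<noteq> 0} \<subseteq> {\<bar>j\<bar>..N - C}"
      using t_vanish by force
    then show "finite {k \<in> {k. \<bar>j\<bar> \<le> k}. \<exists>n<N. t k $$ n \<noteq> 0}"
      by (rule finite_subset) simp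
  qed
  then have "fls_infsum t {k. \<bar>j\<bar> \<le> k} $$ n = sum t {\<bar>j\<bar>..M} $$ n"
    using assms(2) t_vanish
    by (intro fls_has_sum_nth[OF fls_has_sum_infsum, where N = "M + 1 + C"]) auto
  then show ?thesis unfolding res_r_eq t_def fls_nth_sum by simp
qed

lemma sum_res_r_nth:
  assumes bound: "\<forall>n<0. a n \<noteq> 0 \<longrightarrow> fls_subdegree (a n) \<ge> - (n * (n + 3) div 2) + C"
    and "0 \<le> M" "n < M + 1 + C"
  shows "(\<Sum>j=-M..M. res_r a j) $$ n = - a (-1) $$ n"
proof -
  have "(\<Sum>j=-M..M. res_r a j) $$ n
      = - (\<Sum>j=-M..M. \<Sum>k=\<bar>j\<bar>..M. (a (- k - 1) * res_kernel k j) $$ n)"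
    unfolding fls_nth_sum res_r_nth[OF bound assms(3)] by (simp add: sum_negf)
  also have "(\<Sum>j=-M..M. \<Sum>k=\<bar>j\<bar>..M. (a (- k - 1) * res_kernel k j) $$ n)
      = (\<Sum>k=0..M. (a (- k - 1) * (\<Sum>j=-k..k. res_kernel k j)) $$ n)"
    unfolding sum_abs_le_swap by (simp add: sum_distrib_left fls_nth_sum)
  also have "\<dots> = (\<Sum>k=0..M. if k = 0 then a (-1) $$ n else 0)"
    by (intro sum.cong refl) (simp add: sum_res_kernel)
  also have "\<dots> = a (-1) $$ n"
    using assms(2) by simp
  finally show ?thesis by simp
qed

theorem proposition5p6:
  fixes a :: "int \<Rightarrow> int fls"
  assumes "lower_bound_cond a"
  shows "fls_summable (res_r a) (UNIV :: int set) \<and> fls_has_sum (res_r a) (UNIV :: int set) (- a (-1))"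
proof -
  obtain C where bound: "\<forall>n<0. a n \<noteq> 0 \<longrightarrow> fls_subdegree (a n) \<ge> - (n * (n + 3) div 2) + C"
    using assms unfolding lower_bound_cond_def by blast
  have "fls_has_sum (res_r a) UNIV (- a (-1))"
  proof (rule fls_has_sumI)
    fix N
    define M where "M = max 0 (N - C)"
    \<comment> \<open>For \<open>\<bar>j\<bar> > M\<close> the sum over \<open>k\<close> given by res_r_nth is empty.\<close>
    have "res_r a j $$ n = 0" if "j \<in> UNIV - {-M..M}" "n < N" for j n
      using res_r_nth[OF bound, of n M j] that by (auto simp: M_def)
    moreover have "(- a (-1)) $$ n = sum (res_r a) {-M..M} $$ n" if "n < N" for n
      using sum_res_r_nth[OF bound, of M n] that by (simp add: M_def)
    ultimately show "\<exists>J0. finite J0 \<and> J0 \<subseteq> UNIV \<and> (\<forall>j\<in>UNIV - J0. \<forall>n<N. res_r a j $$ n = 0)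
        \<and> (\<forall>n<N. (- a (-1)) $$ n = sum (res_r a) J0 $$ n)"
      by (intro exI[of _ "{-M..M}"]) auto
  qed
  then show ?thesis unfolding fls_summable_def by blast
qed

end
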